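(* Let $S=\{s_1,\dots,s_n\}$ be a finite poset whose Hasse graph $\Gamma(S)$ is acyclic (a forest), and suppose at least one of the forms $f_S$, $\mathcal T_S$ is positive definite. Then the other one is positive definite as well, and the following are equivalent: (a) $C(f_S)=\varnothing$ ($S$ is antimonotonous); (b) $\widetilde{\mathrm{St}}(f_S)\ne\varnothing$ ($S$ is $P$-faithful); (c) $\mathrm{St}(f_S)\ne\varnothing$.
   Context: $f_S(x)=\sum_{(i,j):\,s_i\le s_j}x_ix_j=\sum_i x_i^2+\sum_{s_i<s_j}x_ix_j$. The Hasse graph $\Gamma(S)$ has vertex set $S$ and an edge $s_i - s_j$ when one of them covers the other; the Tits form is $\mathcal T_S(x)=\sum_i x_i^2-\sum_{\text{edges } s_i - s_j}x_ix_j$. $H_n=\{x:\sum x_i=0\}$; $C(f)$ is the set of $h\in H_n\setminus\{0\}$ with either all $\partial f/\partial x_i(h)\le0$ or all $\ge0$. $\mathrm{St}(f)=\{a: a_i>0\ \forall i,\ \partial f/\partial x_i(a)$ independent of $i\}$. With $P_n=\{x:x_i>0,\sum x_i=1\}$ and $\overline P_n=\{x:x_i\ge0,\sum x_i=1\}$, $\widetilde{\mathrm{St}}(f)$ is the set of $u\in P_n$ with $f(u)>0$, $f(u)\le f(w)$ for all $w\in\overline P_n$, and $f(u)<f(w)$ for $w\in\overline P_n\setminus P_n$. *)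

theory Defs
  imports "HOL-Analysis.Analysis"
begin

text \<open>A finite poset S = {s_1,...,s_n} is modelled by a finite (nonempty) type 'a with a
  partial order relation le. Vectors in R^n are functions 'a => real.\<close>

definition is_poset :: "('a \<Rightarrow> 'a \<Rightarrow> bool) \<Rightarrow> bool" where
  "is_poset le \<longleftrightarrow> (\<forall>x. le x x) \<and> (\<forall>x y. le x y \<and> le y x \<longrightarrow> x = y)
     \<and> (\<forall>x y z. le x y \<and> le y z \<longrightarrow> le x z)"

definition f_S :: "('a::finite \<Rightarrow> 'a \<Rightarrow> bool) \<Rightarrow> ('a \<Rightarrow> real) \<Rightarrow> real" where
  "f_S le x = (\<Sum>i\<in>UNIV. \<Sum>j\<in>UNIV. if le i j then x i * x j else 0)"

definition covers :: "('a \<Rightarrow> 'a \<Rightarrow> bool) \<Rightarrow> 'a \<Rightarrow> 'a \<Rightarrow> bool" where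
  "covers le i j \<longleftrightarrow> le i j \<and> i \<noteq> j \<and> \<not> (\<exists>k. le i k \<and> le k j \<and> k \<noteq> i \<and> k \<noteq> j)"

definition hasse_edge :: "('a \<Rightarrow> 'a \<Rightarrow> bool) \<Rightarrow> 'a \<Rightarrow> 'a \<Rightarrow> bool" where
  "hasse_edge le i j \<longleftrightarrow> covers le i j \<or> covers le j i"

definition hasse_acyclic :: "('a \<Rightarrow> 'a \<Rightarrow> bool) \<Rightarrow> bool" where
  "hasse_acyclic le \<longleftrightarrow> \<not> (\<exists>vs. length vs \<ge> 3 \<and> distinct vs
      \<and> (\<forall>k < length vs - 1. hasse_edge le (vs ! k) (vs ! Suc k))
      \<and> hasse_edge le (last vs) (hd vs))"

text \<open>Tits form: sum x_i^2 minus sum over (unordered) Hasse edges of x_i x_j; each edge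
  s_i - s_j corresponds to exactly one covering pair (i,j) with s_j covering s_i.\<close>
definition tits_form :: "('a::finite \<Rightarrow> 'a \<Rightarrow> bool) \<Rightarrow> ('a \<Rightarrow> real) \<Rightarrow> real" where
  "tits_form le x = (\<Sum>i\<in>UNIV. (x i)\<^sup>2)
      - (\<Sum>i\<in>UNIV. \<Sum>j\<in>UNIV. if covers le i j then x i * x j else 0)"

definition pos_def :: "(('a \<Rightarrow> real) \<Rightarrow> real) \<Rightarrow> bool" where
  "pos_def f \<longleftrightarrow> (\<forall>x. x \<noteq> (\<lambda>_. 0) \<longrightarrow> f x > 0)"

definition pderiv_at :: "(('a \<Rightarrow> real) \<Rightarrow> real) \<Rightarrow> 'a \<Rightarrow> ('a \<Rightarrow> real) \<Rightarrow> real" where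
  "pderiv_at f i x = deriv (\<lambda>t. f (x(i := t))) (x i)"

definition H_n :: "('a::finite \<Rightarrow> real) set" where
  "H_n = {x. (\<Sum>i\<in>UNIV. x i) = 0}"

definition C_set :: "(('a::finite \<Rightarrow> real) \<Rightarrow> real) \<Rightarrow> ('a \<Rightarrow> real) set" where
  "C_set f = {h \<in> H_n - {\<lambda>_. 0}. (\<forall>i. pderiv_at f i h \<le> 0) \<or> (\<forall>i. pderiv_at f i h \<ge> 0)}"

definition St :: "(('a \<Rightarrow> real) \<Rightarrow> real) \<Rightarrow> ('a \<Rightarrow> real) set" where
  "St f = {a. (\<forall>i. a i > 0) \<and> (\<forall>i j. pderiv_at f i a = pderiv_at f j a)}"

definition P_n :: "('a::finite \<Rightarrow> real) set" where
  "P_n = {x. (\<forall>i. x i > 0) \<and> (\<Sum>i\<in>UNIV. x i) = 1}"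

definition P_n_closed :: "('a::finite \<Rightarrow> real) set" where
  "P_n_closed = {x. (\<forall>i. x i \<ge> 0) \<and> (\<Sum>i\<in>UNIV. x i) = 1}"

definition St_tilde :: "(('a::finite \<Rightarrow> real) \<Rightarrow> real) \<Rightarrow> ('a \<Rightarrow> real) set" where
  "St_tilde f = {u \<in> P_n. f u > 0 \<and> (\<forall>w\<in>P_n_closed. f u \<le> f w)
       \<and> (\<forall>w\<in>P_n_closed - P_n. f u < f w)}"

end

theory Submission
  imports Defs
begin

text \<open>
  When the Hasse graph is a forest, for s_b < s_a there is exactly one lower cover s_d of s_a
  above s_b: two of them would close a cycle through a maximal common lower bound. Hence
  x \<mapsto> (a \<mapsto> x_a - \<Sum> {x_d | s_d covered by s_a}) inverts the zeta transform
  y \<mapsto> (a \<mapsto> \<Sum> {y_b | s_b \<le> s_a}), and the zeta transform carries the Tits form onto f_S,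
  so one form is positive definite iff the other is.

  For positive definite f_S the gradient G = grad f_S is a symmetric linear bijection and
  f_S(u + t d) = f_S(u) + t \<langle>d, G u\<rangle> + t^2 f_S(d). A minimiser in the open simplex has
  constant gradient by the first-order condition; a positive point with constant gradient,
  normalised, strictly minimises f_S on the closed simplex, the linear term vanishing on H_n.
  If G a is constant with a > 0, then \<langle>a, G h\<rangle> = \<langle>h, G a\<rangle> = 0 for h \<in> H_n, so G h cannot
  have constant sign unless h = 0. Conversely, if C(f_S) is empty then the solution w of
  G w = 1 is positive: otherwise w_i \<le> 0 < w_j, and the solution h of G h = w_j e_i - w_i e_j
  lies in C(f_S).
\<close>

section \<open>Lower covers in a poset with acyclic Hasse graph\<close>

lemma poset_refl: "is_poset le \<Longrightarrow> le x x"
  unfolding is_poset_def by blast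

lemma poset_antisym: "is_poset le \<Longrightarrow> le x y \<Longrightarrow> le y x \<Longrightarrow> x = y"
  unfolding is_poset_def by blast

lemma poset_trans: "is_poset le \<Longrightarrow> le x y \<Longrightarrow> le y z \<Longrightarrow> le x z"
  unfolding is_poset_def by blast

lemma poset_maximal_above:
  fixes le :: "'a::finite \<Rightarrow> 'a \<Rightarrow> bool"
  assumes P: "is_poset le" and "x \<in> S"
  shows "\<exists>m\<in>S. le x m \<and> (\<forall>m'\<in>S. le m m' \<longrightarrow> m' = m)"
proof -
  let ?up = "\<lambda>m. card {l. le m l}"
  obtain m where m: "m \<in> S" "le x m"
    and least: "\<And>m'. m' \<in> S \<and> le x m' \<Longrightarrow> ?up m \<le> ?up m'"
    using ex_has_least_nat[of "\<lambda>m. m \<in> S \<and> le x m" x ?up] assms(2) poset_refl[OF P] by blast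
  have "m' = m" if m': "m' \<in> S" "le m m'" for m'
  proof (rule ccontr)
    assume "m' \<noteq> m"
    with m' have "{l. le m' l} \<subset> {l. le m l}"
      using poset_trans[OF P] poset_antisym[OF P] poset_refl[OF P] by blast
    then have "?up m' < ?up m" by (intro psubset_card_mono) auto
    moreover have "?up m \<le> ?up m'" using least m' m poset_trans[OF P] by blast
    ultimately show False by linarith
  qed
  with m show ?thesis by blast
qed

lemma lower_cover_exists:
  fixes le :: "'a::finite \<Rightarrow> 'a \<Rightarrow> bool"
  assumes P: "is_poset le" and "le i k" "i \<noteq> k"
  shows "\<exists>j. le i j \<and> covers le j k"
proof -
  obtain j where "le j k" "j \<noteq> k" "le i j"
    and "\<And>l. le l k \<Longrightarrow> l \<noteq> k \<Longrightarrow> le j l \<Longrightarrow> l = j"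
    using poset_maximal_above[OF P, of i "{j. le j k \<and> j \<noteq> k}"] assms by auto
  then show ?thesis unfolding covers_def by blast
qed

lemma cover_chain:
  fixes le :: "'a::finite \<Rightarrow> 'a \<Rightarrow> bool"
  assumes P: "is_poset le" and "le x y"
  shows "\<exists>p. p \<noteq> [] \<and> hd p = x \<and> last p = y \<and> distinct p \<and> successively (covers le) p
    \<and> (\<forall>z\<in>set p. le x z \<and> le z y)"
  using assms(2)
proof (induction "card {l. le x l \<and> le l y}" arbitrary: y rule: less_induct)
  case less
  show ?case
  proof (cases "x = y")
    case True
    then show ?thesis using poset_refl[OF P] by (intro exI[of _ "[x]"]) auto
  next
    case False
    then obtain j where j: "le x j" "covers le j y"
      using lower_cover_exists[OF P less.prems] by blast
    then have jy: "le j y" "j \<noteq> y" unfolding covers_def by auto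
    then have "{l. le x l \<and> le l j} \<subset> {l. le x l \<and> le l y}"
      using less.prems poset_trans[OF P] poset_antisym[OF P] poset_refl[OF P] by blast
    then have "card {l. le x l \<and> le l j} < card {l. le x l \<and> le l y}"
      by (intro psubset_card_mono) auto
    from less.hyps[OF this j(1)] obtain p where p: "p \<noteq> []" "hd p = x" "last p = j"
      "distinct p" "successively (covers le) p" "\<forall>z\<in>set p. le x z \<and> le z j" by blast
    have "y \<notin> set p" using p(6) jy poset_antisym[OF P] by blast
    with p j jy less.prems show ?thesis
      by (intro exI[of _ "p @ [y]"])
        (auto simp: successively_append_iff intro: poset_trans[OF P] poset_refl[OF P])
  qed
qed

lemma hasse_edge_sym: "hasse_edge le i j = hasse_edge le j i"
  unfolding hasse_edge_def by blast

lemma covers_imp_hasse_edge: "covers le i j \<Longrightarrow> hasse_edge le i j"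
  unfolding hasse_edge_def by blast

lemma hasse_acyclicD:
  assumes "hasse_acyclic le" "3 \<le> length vs" "distinct vs"
    "successively (hasse_edge le) vs" "hasse_edge le (last vs) (hd vs)"
  shows False
  using assms unfolding hasse_acyclic_def successively_conv_nth by auto

lemma lower_cover_unique:
  fixes le :: "'a::finite \<Rightarrow> 'a \<Rightarrow> bool"
  assumes P: "is_poset le" and A: "hasse_acyclic le"
    and "le i j\<^sub>1" "covers le j\<^sub>1 k" "le i j\<^sub>2" "covers le j\<^sub>2 k"
  shows "j\<^sub>1 = j\<^sub>2"
proof (rule ccontr)
  assume "j\<^sub>1 \<noteq> j\<^sub>2"
  have j\<^sub>1: "le j\<^sub>1 k" "j\<^sub>1 \<noteq> k" "\<And>l. le j\<^sub>1 l \<Longrightarrow> le l k \<Longrightarrow> l = j\<^sub>1 \<or> l = k"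
    and j\<^sub>2: "le j\<^sub>2 k" "j\<^sub>2 \<noteq> k" "\<And>l. le j\<^sub>2 l \<Longrightarrow> le l k \<Longrightarrow> l = j\<^sub>2 \<or> l = k"
    using assms(4,6) unfolding covers_def by auto
  obtain m where m: "le m j\<^sub>1" "le m j\<^sub>2"
    and m_max: "\<And>m'. le m' j\<^sub>1 \<Longrightarrow> le m' j\<^sub>2 \<Longrightarrow> le m m' \<Longrightarrow> m' = m"
    using poset_maximal_above[OF P, of i "{m. le m j\<^sub>1 \<and> le m j\<^sub>2}"] assms(3,5) by auto
  have "m \<noteq> j\<^sub>2" using m(1) j\<^sub>1 j\<^sub>2 \<open>j\<^sub>1 \<noteq> j\<^sub>2\<close> by blast
  obtain p where p: "p \<noteq> []" "hd p = m" "last p = j\<^sub>1" "distinct p"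
    "successively (covers le) p" "\<forall>z\<in>set p. le m z \<and> le z j\<^sub>1"
    using cover_chain[OF P m(1)] by blast
  obtain p' where p': "p' \<noteq> []" "hd p' = m" "last p' = j\<^sub>2" "distinct p'"
    "successively (covers le) p'" "\<forall>z\<in>set p'. le m z \<and> le z j\<^sub>2"
    using cover_chain[OF P m(2)] by blast
  then obtain q where q: "p' = m # q" "q \<noteq> []" "last q = j\<^sub>2"
    using \<open>m \<noteq> j\<^sub>2\<close> by (cases p') (auto split: if_split_asm)
  \<comment> \<open>The two chains meet only in m, so m ... j1 k j2 ... m is a cycle of the Hasse graph.\<close>
  define cyc where "cyc = p @ k # rev q"
  have "set p \<inter> set q = {}"
    using p(6) p'(4,6) q(1) m_max by fastforce
  moreover have "k \<notin> set p" "k \<notin> set q"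
    using p(6) p'(6) q(1) j\<^sub>1(1,2) j\<^sub>2(1,2) poset_antisym[OF P] by auto
  ultimately have "distinct cyc" unfolding cyc_def using p(4) p'(4) q(1) by auto
  moreover have "3 \<le> length cyc" unfolding cyc_def using p(1) q(2) by (cases p; cases q) auto
  moreover have "successively (hasse_edge le) cyc"
  proof -
    have "successively (hasse_edge le) p"
      using p(5) by (rule successively_mono) (rule covers_imp_hasse_edge)
    moreover have "successively (hasse_edge le) (k # rev q)"
      using p'(5) q assms(6)
      by (auto simp: successively_Cons hd_rev hasse_edge_sym covers_imp_hasse_edge
          elim!: successively_mono)
    ultimately show ?thesis
      unfolding cyc_def using p(1,3) assms(4)
      by (auto simp: successively_append_iff covers_imp_hasse_edge)
  qed
  moreover have "hasse_edge le (last cyc) (hd cyc)"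
    unfolding cyc_def using p(1,2) p'(5) q(1,2)
    by (cases q) (auto simp: last_rev hasse_edge_def successively_Cons)
  ultimately show False using hasse_acyclicD[OF A] by blast
qed

section \<open>The zeta transform and the Tits form\<close>

lemma sum_covers_between:
  fixes le :: "'a::finite \<Rightarrow> 'a \<Rightarrow> bool"
  assumes P: "is_poset le" and A: "hasse_acyclic le"
  shows "(\<Sum>d\<in>UNIV. if le b d \<and> covers le d a then 1 else 0 :: real)
     = (if le b a \<and> b \<noteq> a then 1 else 0)"
proof (cases "le b a \<and> b \<noteq> a")
  case True
  then obtain j where j: "le b j" "covers le j a" using lower_cover_exists[OF P] by blast
  then have "(le b d \<and> covers le d a) = (d = j)" for d
    using lower_cover_unique[OF P A, of b d a j] by blast
  with True show ?thesis by simp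
next
  case False
  have "\<not> (le b d \<and> covers le d a)" for d
    using False poset_trans[OF P] poset_antisym[OF P] unfolding covers_def by blast
  then have "(\<Sum>d\<in>UNIV. if le b d \<and> covers le d a then 1 else 0 :: real) = 0"
    by (intro sum.neutral) auto
  with False show ?thesis by simp
qed

definition zeta_transform :: "('a::finite \<Rightarrow> 'a \<Rightarrow> bool) \<Rightarrow> ('a \<Rightarrow> real) \<Rightarrow> 'a \<Rightarrow> real" where
  "zeta_transform le y a = (\<Sum>b\<in>UNIV. if le b a then y b else 0)"

definition cover_difference :: "('a::finite \<Rightarrow> 'a \<Rightarrow> bool) \<Rightarrow> ('a \<Rightarrow> real) \<Rightarrow> 'a \<Rightarrow> real" where
  "cover_difference le x a = x a - (\<Sum>d\<in>UNIV. if covers le d a then x d else 0)"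

lemma cover_difference_zeta_transform:
  fixes le :: "'a::finite \<Rightarrow> 'a \<Rightarrow> bool"
  assumes P: "is_poset le" and A: "hasse_acyclic le"
  shows "cover_difference le (zeta_transform le y) = y"
proof
  fix a
  have "(\<Sum>d\<in>UNIV. if covers le d a then zeta_transform le y d else 0)
      = (\<Sum>d\<in>UNIV. \<Sum>b\<in>UNIV. if le b d \<and> covers le d a then y b else 0)"
    unfolding zeta_transform_def by (rule sum.cong) auto
  also have "\<dots> = (\<Sum>b\<in>UNIV. y b * (\<Sum>d\<in>UNIV. if le b d \<and> covers le d a then 1 else 0))"
    unfolding sum_distrib_left by (subst sum.swap) (auto intro!: sum.cong)
  also have "\<dots> = (\<Sum>b\<in>UNIV. if le b a \<and> b \<noteq> a then y b else 0)"
    by (simp add: sum_covers_between[OF P A] if_distrib cong: if_cong)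
  also have "\<dots> = (\<Sum>b\<in>UNIV. (if le b a then y b else 0) - (if b = a then y b else 0))"
    by (rule sum.cong) (auto simp: poset_refl[OF P])
  also have "\<dots> = zeta_transform le y a - y a"
    by (simp add: sum_subtractf zeta_transform_def)
  finally show "cover_difference le (zeta_transform le y) a = y a"
    unfolding cover_difference_def by simp
qed

lemma tits_form_eq_sum_cover_difference:
  "tits_form le x = (\<Sum>a\<in>UNIV. x a * cover_difference le x a)"
proof -
  have "(\<Sum>i\<in>UNIV. \<Sum>j\<in>UNIV. if covers le i j then x i * x j else 0)
      = (\<Sum>a\<in>UNIV. x a * (\<Sum>d\<in>UNIV. if covers le d a then x d else 0))"
    unfolding sum_distrib_left by (subst sum.swap) (auto intro!: sum.cong)
  then show ?thesis
    unfolding tits_form_def cover_difference_def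
    by (simp add: right_diff_distrib sum_subtractf power2_eq_square)
qed

lemma tits_form_zeta_transform:
  fixes le :: "'a::finite \<Rightarrow> 'a \<Rightarrow> bool"
  assumes "is_poset le" and "hasse_acyclic le"
  shows "tits_form le (zeta_transform le y) = f_S le y"
proof -
  have "tits_form le (zeta_transform le y) = (\<Sum>a\<in>UNIV. zeta_transform le y a * y a)"
    unfolding tits_form_eq_sum_cover_difference cover_difference_zeta_transform[OF assms] ..
  also have "\<dots> = f_S le y"
    unfolding zeta_transform_def f_S_def sum_distrib_right by (subst sum.swap) (auto intro!: sum.cong)
  finally show ?thesis .
qed

lemma zeta_transform_eq_0_iff:
  fixes le :: "'a::finite \<Rightarrow> 'a \<Rightarrow> bool"
  assumes "is_poset le" and "hasse_acyclic le"
  shows "zeta_transform le y = (\<lambda>_. 0) \<longleftrightarrow> y = (\<lambda>_. 0)"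
proof
  assume "zeta_transform le y = (\<lambda>_. 0)"
  then have "y = cover_difference le (\<lambda>_. 0)"
    using cover_difference_zeta_transform[OF assms, of y] by simp
  then show "y = (\<lambda>_. 0)" by (simp add: cover_difference_def fun_eq_iff)
qed (simp add: zeta_transform_def[abs_def])

lemma linear_fun_surj_if_kernel_trivial:
  fixes T :: "('a::finite \<Rightarrow> real) \<Rightarrow> 'a \<Rightarrow> real"
  assumes add: "\<And>x y. T (\<lambda>i. x i + y i) = (\<lambda>i. T x i + T y i)"
    and scale: "\<And>c x. T (\<lambda>i. c * x i) = (\<lambda>i. c * T x i)"
    and kernel: "\<And>x. T x = (\<lambda>_. 0) \<Longrightarrow> x = (\<lambda>_. 0)"
  shows "\<exists>x. T x = b"
proof -
  define \<phi> :: "real^'a \<Rightarrow> real^'a" where "\<phi> v = vec_lambda (T (vec_nth v))" for v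
  have nth_add: "vec_nth (v + w) = (\<lambda>i. v $ i + w $ i)"
    and nth_scale: "vec_nth (c *\<^sub>R v) = (\<lambda>i. c * v $ i)" for v w :: "real^'a" and c
    by auto
  have lin: "linear \<phi>"
  proof
    show "\<phi> (v + w) = \<phi> v + \<phi> w" for v w
      by (simp add: \<phi>_def vec_eq_iff nth_add add)
    show "\<phi> (c *\<^sub>R v) = c *\<^sub>R \<phi> v" for c v
      by (simp add: \<phi>_def vec_eq_iff nth_scale scale)
  qed
  have "inj \<phi>"
    unfolding linear_injective_0[OF lin]
  proof (intro allI impI)
    fix v assume "\<phi> v = 0"
    then have "T (vec_nth v) = (\<lambda>_. 0)" by (simp add: \<phi>_def vec_eq_iff fun_eq_iff)
    then show "v = 0" using kernel by (simp add: vec_eq_iff fun_eq_iff)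
  qed
  then obtain v where "\<phi> v = vec_lambda b"
    using linear_injective_imp_surjective[OF lin] by (metis surjD)
  then have "T (vec_nth v) = b" by (simp add: \<phi>_def vec_eq_iff fun_eq_iff)
  then show ?thesis by blast
qed

lemma zeta_transform_surj:
  fixes le :: "'a::finite \<Rightarrow> 'a \<Rightarrow> bool"
  assumes "is_poset le" and "hasse_acyclic le"
  shows "\<exists>y. zeta_transform le y = x"
proof (rule linear_fun_surj_if_kernel_trivial)
  show "zeta_transform le (\<lambda>i. y i + z i) = (\<lambda>i. zeta_transform le y i + zeta_transform le z i)"
    for y z
    by (auto simp: zeta_transform_def fun_eq_iff sum.distrib[symmetric] intro!: sum.cong)
  show "zeta_transform le (\<lambda>i. c * y i) = (\<lambda>i. c * zeta_transform le y i)" for c y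
    by (auto simp: zeta_transform_def fun_eq_iff sum_distrib_left intro!: sum.cong)
  show "y = (\<lambda>_. 0)" if "zeta_transform le y = (\<lambda>_. 0)" for y
    using that zeta_transform_eq_0_iff[OF assms] by blast
qed

lemma pos_def_f_S_iff_tits_form:
  fixes le :: "'a::finite \<Rightarrow> 'a \<Rightarrow> bool"
  assumes "is_poset le" and "hasse_acyclic le"
  shows "pos_def (f_S le) \<longleftrightarrow> pos_def (tits_form le)"
  unfolding pos_def_def
  by (metis tits_form_zeta_transform[OF assms] zeta_transform_surj[OF assms]
      zeta_transform_eq_0_iff[OF assms])

section \<open>The gradient of f_S\<close>

definition f_S_grad :: "('a::finite \<Rightarrow> 'a \<Rightarrow> bool) \<Rightarrow> ('a \<Rightarrow> real) \<Rightarrow> 'a \<Rightarrow> real" where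
  "f_S_grad le x i = (\<Sum>j\<in>UNIV. if le i j then x j else 0) + (\<Sum>j\<in>UNIV. if le j i then x j else 0)"

lemma sum_mult_f_S_grad:
  "(\<Sum>i\<in>UNIV. x i * f_S_grad le y i)
     = (\<Sum>i\<in>UNIV. \<Sum>j\<in>UNIV. if le i j then x i * y j + y i * x j else 0)"
proof -
  have "(\<Sum>i\<in>UNIV. x i * f_S_grad le y i)
      = (\<Sum>i\<in>UNIV. \<Sum>j\<in>UNIV. if le i j then x i * y j else 0)
        + (\<Sum>i\<in>UNIV. \<Sum>j\<in>UNIV. if le j i then x i * y j else 0)"
    by (simp add: f_S_grad_def distrib_left sum.distrib sum_distrib_left if_distrib cong: if_cong)
  also have "(\<Sum>i\<in>UNIV. \<Sum>j\<in>UNIV. if le j i then x i * y j else 0)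
      = (\<Sum>i\<in>UNIV. \<Sum>j\<in>UNIV. if le i j then y i * x j else 0)"
    by (subst sum.swap) (auto intro!: sum.cong)
  finally show ?thesis
    by (simp add: sum.distrib[symmetric] if_distrib cong: if_cong)
qed

lemma f_S_grad_sym: "(\<Sum>i\<in>UNIV. x i * f_S_grad le y i) = (\<Sum>i\<in>UNIV. y i * f_S_grad le x i)"
  unfolding sum_mult_f_S_grad by (auto intro!: sum.cong)

lemma sum_mult_f_S_grad_self: "(\<Sum>i\<in>UNIV. x i * f_S_grad le x i) = 2 * f_S le x"
  unfolding sum_mult_f_S_grad f_S_def sum_distrib_left by (auto intro!: sum.cong)

lemma f_S_add_scaled:
  "f_S le (\<lambda>i. u i + t * d i)
     = f_S le u + t * (\<Sum>i\<in>UNIV. d i * f_S_grad le u i) + t\<^sup>2 * f_S le d"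
  unfolding sum_mult_f_S_grad f_S_def sum_distrib_left sum.distrib[symmetric]
  by (auto intro!: sum.cong simp: algebra_simps power2_eq_square)

lemma f_S_grad_add: "f_S_grad le (\<lambda>i. x i + y i) = (\<lambda>i. f_S_grad le x i + f_S_grad le y i)"
  by (auto simp: f_S_grad_def fun_eq_iff sum.distrib[symmetric] intro!: sum.cong)

lemma f_S_grad_scale: "f_S_grad le (\<lambda>i. c * x i) = (\<lambda>i. c * f_S_grad le x i)"
  by (simp add: f_S_grad_def fun_eq_iff sum_distrib_left distrib_left if_distrib cong: if_cong)

lemma f_S_line_has_derivative:
  "((\<lambda>t. f_S le (\<lambda>i. u i + t * d i)) has_real_derivative
     (\<Sum>i\<in>UNIV. d i * f_S_grad le (\<lambda>i. u i + s * d i) i)) (at s)"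
proof -
  let ?v = "\<lambda>i. u i + s * d i"
  let ?g = "\<Sum>i\<in>UNIV. d i * f_S_grad le ?v i"
  have line: "f_S le ?v + (t - s) * ?g + (t - s)\<^sup>2 * f_S le d = f_S le (\<lambda>i. u i + t * d i)" for t
  proof -
    have "(\<lambda>i. u i + t * d i) = (\<lambda>i. ?v i + (t - s) * d i)" by (simp add: algebra_simps)
    then show ?thesis by (simp only: f_S_add_scaled)
  qed
  have "((\<lambda>t. f_S le ?v + (t - s) * ?g + (t - s)\<^sup>2 * f_S le d) has_real_derivative ?g) (at s)"
    by (auto intro!: derivative_eq_intros)
  then show ?thesis by (simp only: line)
qed

lemma pderiv_at_f_S: "pderiv_at (f_S le) i x = f_S_grad le x i"
proof -
  define e where "e = (\<lambda>j. of_bool (j = i) :: real)"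
  have "x(i := t) = (\<lambda>j. (x(i := 0)) j + t * e j)" for t
    by (auto simp: e_def)
  moreover have "(\<lambda>j. (x(i := 0)) j + x i * e j) = x"
    by (auto simp: e_def)
  ultimately have "((\<lambda>t. f_S le (x(i := t))) has_real_derivative
      (\<Sum>j\<in>UNIV. e j * f_S_grad le x j)) (at (x i))"
    using f_S_line_has_derivative[of le "x(i := 0)" e "x i"] by simp
  then show ?thesis
    unfolding pderiv_at_def by (simp add: DERIV_imp_deriv e_def)
qed

lemma C_set_f_S:
  "C_set (f_S le) = {h. (\<Sum>i\<in>UNIV. h i) = 0 \<and> h \<noteq> (\<lambda>_. 0)
     \<and> ((\<forall>i. f_S_grad le h i \<le> 0) \<or> (\<forall>i. f_S_grad le h i \<ge> 0))}"
  by (auto simp: C_set_def H_n_def pderiv_at_f_S)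

lemma St_f_S:
  "St (f_S le) = {a. (\<forall>i. a i > 0) \<and> (\<forall>i j. f_S_grad le a i = f_S_grad le a j)}"
  by (simp add: St_def pderiv_at_f_S)

lemma f_S_grad_eq_0_imp:
  assumes "pos_def (f_S le)" and "f_S_grad le x = (\<lambda>_. 0)"
  shows "x = (\<lambda>_. 0)"
proof (rule ccontr)
  assume "x \<noteq> (\<lambda>_. 0)"
  then have "f_S le x > 0" using assms(1) unfolding pos_def_def by blast
  moreover have "2 * f_S le x = 0" using assms(2) sum_mult_f_S_grad_self[of x le] by simp
  ultimately show False by simp
qed

lemma f_S_grad_surj:
  fixes le :: "'a::finite \<Rightarrow> 'a \<Rightarrow> bool"
  assumes "pos_def (f_S le)"
  shows "\<exists>x. f_S_grad le x = b"
  using linear_fun_surj_if_kernel_trivial[where T = "f_S_grad le"]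
    f_S_grad_add f_S_grad_scale f_S_grad_eq_0_imp[OF assms] by blast

section \<open>Stationary points, minimisers and the cone C(f_S)\<close>

lemma f_S_nonneg_if_pos_def:
  assumes "pos_def (f_S le)"
  shows "0 \<le> f_S le x"
proof (cases "x = (\<lambda>_. 0)")
  case True
  then show ?thesis by (simp add: f_S_def cong: if_cong)
next
  case False
  with assms show ?thesis by (simp add: pos_def_def less_imp_le)
qed

lemma St_tilde_subset_St: "St_tilde (f_S le) \<subseteq> St (f_S le)"
proof
  fix u assume "u \<in> St_tilde (f_S le)"
  then have u_pos: "\<And>i. u i > 0" and u_sum: "(\<Sum>i\<in>UNIV. u i) = 1"
    and u_min: "\<And>w. w \<in> P_n_closed \<Longrightarrow> f_S le u \<le> f_S le w"
    unfolding St_tilde_def P_n_def by auto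
  define r where "r = Min (range u)"
  have "r > 0" using u_pos by (simp add: r_def)
  have "f_S_grad le u i = f_S_grad le u j" for i j
  proof -
    define d where "d = (\<lambda>k. of_bool (k = i) - of_bool (k = j) :: real)"
    have deriv: "((\<lambda>t. f_S le (\<lambda>k. u k + t * d k)) has_real_derivative
        (\<Sum>k\<in>UNIV. d k * f_S_grad le u k)) (at 0)"
      using f_S_line_has_derivative[of le u d 0] by simp
    have "f_S le (\<lambda>k. u k + 0 * d k) \<le> f_S le (\<lambda>k. u k + t * d k)" if "\<bar>0 - t\<bar> < r" for t
    proof -
      have "\<bar>t * d k\<bar> \<le> \<bar>t\<bar>" for k by (simp add: d_def abs_mult)
      moreover have "r \<le> u k" for k by (simp add: r_def)
      ultimately have "u k + t * d k \<ge> 0" for k using that by (smt (verit))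
      moreover have "(\<Sum>k\<in>UNIV. u k + t * d k) = 1"
        using u_sum by (simp add: d_def sum.distrib sum_subtractf algebra_simps)
      ultimately show ?thesis using u_min by (simp add: P_n_closed_def)
    qed
    then have "(\<Sum>k\<in>UNIV. d k * f_S_grad le u k) = 0"
      using DERIV_local_min[OF deriv \<open>r > 0\<close>] by blast
    then show ?thesis by (simp add: d_def left_diff_distrib sum_subtractf)
  qed
  with u_pos show "u \<in> St (f_S le)" by (simp add: St_f_S)
qed

lemma St_normalized_in_St_tilde:
  assumes pd: "pos_def (f_S le)" and "a \<in> St (f_S le)"
  shows "(\<lambda>i. a i / (\<Sum>j\<in>UNIV. a j)) \<in> St_tilde (f_S le)"
proof -
  define s where "s = (\<Sum>j\<in>UNIV. a j)"
  define u where "u = (\<lambda>i. inverse s * a i)"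
  obtain \<nu> where a_pos: "\<And>i. a i > 0" and a_grad: "\<And>i. f_S_grad le a i = \<nu>"
    using assms(2) unfolding St_f_S by blast
  then have "s > 0" by (simp add: s_def sum_pos)
  have u_pos: "\<And>i. u i > 0" and u_sum: "(\<Sum>i\<in>UNIV. u i) = 1"
    using a_pos \<open>s > 0\<close> by (simp_all add: u_def s_def sum_distrib_left[symmetric])
  have u_grad: "\<And>i. f_S_grad le u i = inverse s * \<nu>"
    unfolding u_def f_S_grad_scale a_grad ..
  \<comment> \<open>The gradient at u is constant, so the linear term vanishes on the hyperplane through u.\<close>
  have split: "f_S le w = f_S le u + f_S le (\<lambda>i. w i - u i)" if "(\<Sum>i\<in>UNIV. w i) = 1" for w
    using f_S_add_scaled[of le u 1 "\<lambda>i. w i - u i"] that u_sum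
    by (simp add: u_grad sum_distrib_right[symmetric] sum_subtractf)
  have "u \<noteq> (\<lambda>_. 0)" using u_pos by (metis less_irrefl)
  then have "f_S le u > 0" using pd unfolding pos_def_def by blast
  moreover have "f_S le u \<le> f_S le w" if "w \<in> P_n_closed" for w
    using split[of w] f_S_nonneg_if_pos_def[OF pd, of "\<lambda>i. w i - u i"] that
    by (simp add: P_n_closed_def)
  moreover have "f_S le u < f_S le w" if "w \<in> P_n_closed - P_n" for w
  proof -
    from that obtain i where "\<not> w i > 0" and w_sum: "(\<Sum>i\<in>UNIV. w i) = 1"
      by (auto simp: P_n_closed_def P_n_def)
    then have "(\<lambda>i. w i - u i) \<noteq> (\<lambda>_. 0)"
      using u_pos[of i] by (metis less_irrefl right_minus_eq)
    then have "f_S le (\<lambda>i. w i - u i) > 0" using pd unfolding pos_def_def by blast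
    then show ?thesis using split[OF w_sum] by simp
  qed
  ultimately have "u \<in> St_tilde (f_S le)"
    using u_pos u_sum by (auto simp: St_tilde_def P_n_def)
  then show ?thesis by (simp add: u_def s_def divide_inverse mult.commute)
qed

lemma St_nonempty_imp_C_set_empty:
  assumes pd: "pos_def (f_S le)" and "a \<in> St (f_S le)"
  shows "C_set (f_S le) = {}"
proof (rule ccontr)
  assume "C_set (f_S le) \<noteq> {}"
  then obtain h where h_sum: "(\<Sum>i\<in>UNIV. h i) = 0" and "h \<noteq> (\<lambda>_. 0)"
    and sign: "(\<forall>i. f_S_grad le h i \<le> 0) \<or> (\<forall>i. f_S_grad le h i \<ge> 0)"
    by (auto simp: C_set_f_S)
  obtain \<nu> where a_pos: "\<And>i. a i > 0" and a_grad: "\<And>i. f_S_grad le a i = \<nu>"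
    using assms(2) unfolding St_f_S by blast
  have "(\<Sum>i\<in>UNIV. a i * f_S_grad le h i) = (\<Sum>i\<in>UNIV. h i * f_S_grad le a i)"
    by (rule f_S_grad_sym)
  also have "\<dots> = 0"
    by (simp add: a_grad sum_distrib_right[symmetric] h_sum)
  finally have sum_zero: "(\<Sum>i\<in>UNIV. a i * f_S_grad le h i) = 0" .
  have "f_S_grad le h i = 0" for i
    using sign
  proof
    assume "\<forall>i. f_S_grad le h i \<le> 0"
    then have "\<forall>i\<in>UNIV. 0 \<le> a i * - f_S_grad le h i"
      using a_pos by (simp add: less_imp_le mult_nonneg_nonpos)
    moreover have "(\<Sum>i\<in>UNIV. a i * - f_S_grad le h i) = 0" using sum_zero by (simp add: sum_negf)
    ultimately have "a i * - f_S_grad le h i = 0" by (simp add: sum_nonneg_eq_0_iff)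
    then show ?thesis using a_pos[of i] by simp
  next
    assume "\<forall>i. f_S_grad le h i \<ge> 0"
    then have "\<forall>i\<in>UNIV. 0 \<le> a i * f_S_grad le h i" using a_pos by (simp add: less_imp_le)
    then have "a i * f_S_grad le h i = 0" using sum_zero by (simp add: sum_nonneg_eq_0_iff)
    then show ?thesis using a_pos[of i] by simp
  qed
  then have "h = (\<lambda>_. 0)" using f_S_grad_eq_0_imp[OF pd] by blast
  with \<open>h \<noteq> (\<lambda>_. 0)\<close> show False ..
qed

lemma C_set_empty_imp_St_nonempty:
  fixes le :: "'a::finite \<Rightarrow> 'a \<Rightarrow> bool"
  assumes pd: "pos_def (f_S le)" and C: "C_set (f_S le) = {}"
  shows "St (f_S le) \<noteq> {}"
proof -
  obtain w where w_grad: "f_S_grad le w = (\<lambda>_. 1)" using f_S_grad_surj[OF pd] by blast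
  have grad_0: "f_S_grad le (\<lambda>_. 0) = (\<lambda>_. 0)" using f_S_grad_scale[of le 0] by simp
  have "w \<noteq> (\<lambda>_. 0)" using w_grad grad_0 by (metis zero_neq_one)
  then have "f_S le w > 0" using pd unfolding pos_def_def by blast
  then have w_sum: "(\<Sum>i\<in>UNIV. w i) > 0"
    using sum_mult_f_S_grad_self[of w le] by (simp add: w_grad)
  show ?thesis
  proof (cases "\<forall>i. w i > 0")
    case True
    then have "w \<in> St (f_S le)" using w_grad by (simp add: St_f_S)
    then show ?thesis by blast
  next
    case False
    then obtain i where w_i: "w i \<le> 0" by (auto simp: not_less)
    obtain j where w_j: "w j > 0" using w_sum by (metis not_less sum_nonpos)
    define g where "g = (\<lambda>l. w j * of_bool (l = i) - w i * of_bool (l = j))"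
    obtain h where h_grad: "f_S_grad le h = g" using f_S_grad_surj[OF pd] by blast
    \<comment> \<open>g \<ge> 0 is chosen orthogonal to w, which puts h into H_n.\<close>
    have "g \<noteq> (\<lambda>_. 0)" using w_i w_j by (auto simp: g_def fun_eq_iff)
    then have "h \<noteq> (\<lambda>_. 0)" using h_grad grad_0 by blast
    have "(\<Sum>l\<in>UNIV. h l) = (\<Sum>l\<in>UNIV. h l * f_S_grad le w l)" by (simp add: w_grad)
    also have "\<dots> = (\<Sum>l\<in>UNIV. w l * g l)" by (simp add: f_S_grad_sym h_grad)
    also have "\<dots> = (\<Sum>l\<in>UNIV. (if l = i then w i * w j else 0) - (if l = j then w j * w i else 0))"
      by (rule sum.cong) (auto simp: g_def)
    also have "\<dots> = 0" by (simp add: sum_subtractf)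
    finally have "h \<in> C_set (f_S le)"
      using \<open>h \<noteq> (\<lambda>_. 0)\<close> h_grad w_i w_j by (auto simp: C_set_f_S g_def)
    with C show ?thesis by blast
  qed
qed

theorem corollary3:
  fixes le :: "'a::finite \<Rightarrow> 'a \<Rightarrow> bool"
  assumes "is_poset le"
    and "hasse_acyclic le"
    and "pos_def (f_S le) \<or> pos_def (tits_form le)"
  shows "pos_def (f_S le) \<and> pos_def (tits_form le)
    \<and> (C_set (f_S le) = {} \<longleftrightarrow> St_tilde (f_S le) \<noteq> {})
    \<and> (St_tilde (f_S le) \<noteq> {} \<longleftrightarrow> St (f_S le) \<noteq> {})"
proof -
  have pd: "pos_def (f_S le)" and "pos_def (tits_form le)"
    using pos_def_f_S_iff_tits_form[OF assms(1,2)] assms(3) by auto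
  moreover have "C_set (f_S le) = {} \<Longrightarrow> St (f_S le) \<noteq> {}"
    using C_set_empty_imp_St_nonempty[OF pd] .
  moreover have "St (f_S le) \<noteq> {} \<Longrightarrow> St_tilde (f_S le) \<noteq> {}"
    using St_normalized_in_St_tilde[OF pd] by blast
  moreover have "St_tilde (f_S le) \<subseteq> St (f_S le)"
    by (rule St_tilde_subset_St)
  moreover have "St (f_S le) \<noteq> {} \<Longrightarrow> C_set (f_S le) = {}"
    using St_nonempty_imp_C_set_empty[OF pd] by blast
  ultimately show ?thesis by blast
qed

end
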